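(* Let $(W,S)$ be a Coxeter group, $w\in W$, and let $s,t$ be two distinct elements of $T=\bigcup_{x\in W}xSx^{-1}$ such that $st$ has finite order $m_{s,t}$. Let $\vec a$ be a reduced expression for $w$. Then: (a) The word $\rho_{s,t}$ appears as a subword of $\operatorname{Invs}\vec a$ at most one time (i.e., in at most one set of positions). (b) The words $\rho_{s,t}$ and $\rho_{t,s}$ cannot both appear as subwords of $\operatorname{Invs}\vec a$.
   Context: $(W,S)$ is a Coxeter group. A reduced expression for $w$ is a tuple $(a_1,\ldots,a_k)\in S^k$ with $w=a_1\cdots a_k$ and $k$ minimal. $\operatorname{Invs}(a_1,\ldots,a_k)=(t_1,\ldots,t_k)$ with $t_i=(a_1\cdots a_{i-1})a_i(a_1\cdots a_{i-1})^{-1}$. For distinct $s,t\in T$ with $m_{s,t}<\infty$, $\rho_{s,t}=((st)^0s,(st)^1s,\ldots,(st)^{m_{s,t}-1}s)$. A subword of $(x_1,\ldots,x_k)$ is a word $(x_{i_1},\ldots,x_{i_p})$ with $i_1<\cdots<i_p$ (not necessarily contiguous). *)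

theory Defs
  imports "HOL-Algebra.Multiplicative_Group" "HOL-Algebra.Generated_Groups"
begin

definition word_prod :: "('a, 'b) monoid_scheme \<Rightarrow> 'a list \<Rightarrow> 'a" where
  "word_prod G xs = foldr (\<lambda>x y. x \<otimes>\<^bsub>G\<^esub> y) xs \<one>\<^bsub>G\<^esub>"

definition alt_word :: "'a \<Rightarrow> 'a \<Rightarrow> nat \<Rightarrow> 'a list" where
  "alt_word s t n = map (\<lambda>i. if even i then s else t) [0..<n]"

(* one-step elementary move: delete a relator (s t)^{m(s,t)} (m finite) from a word;
   for s = t this is the deletion of s s *)
inductive cox_step :: "('a, 'b) monoid_scheme \<Rightarrow> 'a set \<Rightarrow> 'a list \<Rightarrow> 'a list \<Rightarrow> bool"
  for G S where
  "s \<in> S \<Longrightarrow> t \<in> S \<Longrightarrow> group.ord G (s \<otimes>\<^bsub>G\<^esub> t) \<noteq> 0 \<Longrightarrow>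
   cox_step G S (u @ alt_word s t (2 * group.ord G (s \<otimes>\<^bsub>G\<^esub> t)) @ v) (u @ v)"

definition cox_equiv :: "('a, 'b) monoid_scheme \<Rightarrow> 'a set \<Rightarrow> 'a list \<Rightarrow> 'a list \<Rightarrow> bool" where
  "cox_equiv G S = (\<lambda>u v. cox_step G S u v \<or> cox_step G S v u)\<^sup>*\<^sup>*"

(* (G,S) is a Coxeter system: G is generated by the set S of involutions and
   G has the presentation < S | (s t)^{m(s,t)} = 1 for m(s,t) finite >, i.e.
   two words over S have the same product iff they are related by the relations *)
definition coxeter_system :: "('a, 'b) monoid_scheme \<Rightarrow> 'a set \<Rightarrow> bool" where
  "coxeter_system G S \<longleftrightarrow> group G \<and> S \<subseteq> carrier G \<and> generate G S = carrier G \<and>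
     (\<forall>s\<in>S. s \<noteq> \<one>\<^bsub>G\<^esub> \<and> s \<otimes>\<^bsub>G\<^esub> s = \<one>\<^bsub>G\<^esub>) \<and>
     (\<forall>u v. set u \<subseteq> S \<longrightarrow> set v \<subseteq> S \<longrightarrow>
        (word_prod G u = word_prod G v \<longleftrightarrow> cox_equiv G S u v))"

definition reflections :: "('a, 'b) monoid_scheme \<Rightarrow> 'a set \<Rightarrow> 'a set" where
  "reflections G S = {x \<otimes>\<^bsub>G\<^esub> s \<otimes>\<^bsub>G\<^esub> inv\<^bsub>G\<^esub> x | x s. x \<in> carrier G \<and> s \<in> S}"

definition reduced_expr :: "('a, 'b) monoid_scheme \<Rightarrow> 'a set \<Rightarrow> 'a \<Rightarrow> 'a list \<Rightarrow> bool" where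
  "reduced_expr G S w as \<longleftrightarrow> set as \<subseteq> S \<and> word_prod G as = w \<and>
     (\<forall>bs. set bs \<subseteq> S \<longrightarrow> word_prod G bs = w \<longrightarrow> length as \<le> length bs)"

(* Invs(a_1..a_k) = (t_1..t_k), t_i = (a_1...a_{i-1}) a_i (a_1...a_{i-1})^{-1} (0-indexed here) *)
definition invs :: "('a, 'b) monoid_scheme \<Rightarrow> 'a list \<Rightarrow> 'a list" where
  "invs G as = map (\<lambda>i. word_prod G (take i as) \<otimes>\<^bsub>G\<^esub> (as ! i) \<otimes>\<^bsub>G\<^esub>
                        inv\<^bsub>G\<^esub> (word_prod G (take i as))) [0..<length as]"

definition rho :: "('a, 'b) monoid_scheme \<Rightarrow> 'a \<Rightarrow> 'a \<Rightarrow> 'a list" where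
  "rho G s t = map (\<lambda>i. ((s \<otimes>\<^bsub>G\<^esub> t) [^]\<^bsub>G\<^esub> i) \<otimes>\<^bsub>G\<^esub> s) [0..<group.ord G (s \<otimes>\<^bsub>G\<^esub> t)]"

definition subword_at :: "'a list \<Rightarrow> nat list \<Rightarrow> 'a list \<Rightarrow> bool" where
  "subword_at xs js ys \<longleftrightarrow> sorted_wrt (<) js \<and> (\<forall>j\<in>set js. j < length xs) \<and>
     map (\<lambda>j. xs ! j) js = ys"

definition is_subword :: "'a list \<Rightarrow> 'a list \<Rightarrow> bool" where
  "is_subword ys xs \<longleftrightarrow> (\<exists>js. subword_at xs js ys)"

end

theory Submission
  imports Defs
begin

text \<open>The inversions \<open>t\<^sub>1, \<dots>, t\<^sub>k\<close> of a reduced word are pairwise distinct: if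
  \<open>t\<^sub>i = t\<^sub>j\<close> with \<open>i < j\<close>, deleting the letters \<open>a\<^sub>i\<close> and \<open>a\<^sub>j\<close> does not change the product,
  contradicting minimality. In a list without repetitions every entry occurs at exactly
  one position, so the positions of an occurrence of \<open>\<rho>\<^sub>s\<^sub>,\<^sub>t\<close> are determined by its entries.
  Finally \<open>\<rho>\<^sub>s\<^sub>,\<^sub>t\<close> starts with \<open>s\<close> and ends with \<open>t\<close>, while \<open>\<rho>\<^sub>t\<^sub>,\<^sub>s\<close> starts with \<open>t\<close> and
  ends with \<open>s\<close>: occurrences of both would put \<open>s\<close> strictly before and strictly after \<open>t\<close>.\<close>

lemma subword_at_length: "subword_at xs js ys \<Longrightarrow> length js = length ys"
  unfolding subword_at_def by (metis length_map)

lemma subword_at_nth: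
  assumes "subword_at xs js ys" "k < length ys"
  shows "js ! k < length xs" "xs ! (js ! k) = ys ! k"
proof -
  have k: "k < length js"
    using assms by (simp add: subword_at_length)
  then show "js ! k < length xs"
    using assms(1) nth_mem unfolding subword_at_def by blast
  show "xs ! (js ! k) = ys ! k"
    using assms(1) k unfolding subword_at_def by (metis nth_map)
qed

lemma subword_at_strict_mono:
  assumes "subword_at xs js ys" "i < j" "j < length ys"
  shows "js ! i < js ! j"
  using assms subword_at_length[OF assms(1)] sorted_wrt_nth_less[of "(<)" js i j]
  unfolding subword_at_def by (auto simp del: sorted_wrt_map)

lemma subword_at_distinct_positions_eq:
  assumes "distinct xs" "subword_at xs js ys" "subword_at xs ks zs"
    and "i < length ys" "k < length zs" "ys ! i = zs ! k"
  shows "js ! i = ks ! k"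
  using nth_eq_iff_index_eq[OF assms(1) subword_at_nth(1)[OF assms(2,4)]
      subword_at_nth(1)[OF assms(3,5)]]
    subword_at_nth(2)[OF assms(2,4)] subword_at_nth(2)[OF assms(3,5)] assms(6)
  by simp

lemma subword_at_distinct_unique:
  assumes "distinct xs" "subword_at xs js ys" "subword_at xs ks ys"
  shows "js = ks"
proof (rule nth_equalityI)
  show "length js = length ks"
    using assms(2,3) by (simp add: subword_at_length)
  show "js ! i = ks ! i" if "i < length js" for i
    using that subword_at_length[OF assms(2)]
    by (intro subword_at_distinct_positions_eq[OF assms]) simp_all
qed

lemma not_subword_both_with_swapped_ends:
  assumes "distinct xs" "2 \<le> length ys" "2 \<le> length zs"
    and "hd ys = last zs" "last ys = hd zs"
  shows "\<not> (is_subword ys xs \<and> is_subword zs xs)"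
proof
  assume "is_subword ys xs \<and> is_subword zs xs"
  then obtain js ks where js: "subword_at xs js ys" and ks: "subword_at xs ks zs"
    unfolding is_subword_def by blast
  define m n where "m = length ys - 1" and "n = length zs - 1"
  have "ys \<noteq> []" "zs \<noteq> []"
    using assms(2,3) by auto
  then have ends: "ys ! 0 = zs ! n" "ys ! m = zs ! 0"
    using assms(4,5) by (simp_all add: m_def n_def hd_conv_nth last_conv_nth)
  have "js ! 0 < js ! m" "ks ! 0 < ks ! n"
    using assms(2,3) by (auto simp: m_def n_def intro!: subword_at_strict_mono[OF js]
        subword_at_strict_mono[OF ks])
  moreover have "js ! 0 = ks ! n" "js ! m = ks ! 0"
    using assms(2,3) ends
    by (auto simp: m_def n_def intro!: subword_at_distinct_positions_eq[OF assms(1) js ks])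
  ultimately show False by simp
qed

lemma list_split_at_two_positions:
  assumes "i < j" "j < length xs"
  obtains u a v b x where "xs = u @ a # v @ b # x" "length u = i" "length v = j - Suc i"
proof
  have "drop (Suc i) xs = take (j - Suc i) (drop (Suc i) xs) @ xs ! j # drop (Suc j) xs"
    using assms id_take_nth_drop[of "j - Suc i" "drop (Suc i) xs"] by simp
  then show "xs = take i xs @ xs ! i # take (j - Suc i) (drop (Suc i) xs) @ xs ! j # drop (Suc j) xs"
    using assms id_take_nth_drop[of i xs] by simp
qed (use assms in simp_all)

lemma length_invs [simp]: "length (invs G as) = length as"
  by (simp add: invs_def)

lemma nth_invs:
  "i < length as \<Longrightarrow>
   invs G as ! i = word_prod G (take i as) \<otimes>\<^bsub>G\<^esub> as ! i \<otimes>\<^bsub>G\<^esub> inv\<^bsub>G\<^esub> word_prod G (take i as)"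
  by (simp add: invs_def)

context group begin

lemma word_prod_Nil [simp]: "word_prod G [] = \<one>"
  by (simp add: word_prod_def)

lemma word_prod_Cons [simp]: "word_prod G (a # xs) = a \<otimes> word_prod G xs"
  by (simp add: word_prod_def)

lemma word_prod_closed [intro, simp]: "set xs \<subseteq> carrier G \<Longrightarrow> word_prod G xs \<in> carrier G"
  by (induction xs) auto

lemma word_prod_append [simp]:
  "set xs \<subseteq> carrier G \<Longrightarrow> set ys \<subseteq> carrier G \<Longrightarrow>
   word_prod G (xs @ ys) = word_prod G xs \<otimes> word_prod G ys"
  by (induction xs) (auto simp: m_assoc)

lemma reflection_closed:
  assumes "S \<subseteq> carrier G" "r \<in> reflections G S"
  shows "r \<in> carrier G"
  using assms unfolding reflections_def by auto

lemma reflection_square: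
  assumes "S \<subseteq> carrier G" "\<forall>s\<in>S. s \<otimes> s = \<one>" "r \<in> reflections G S"
  shows "r \<otimes> r = \<one>"
proof -
  obtain x a where r: "r = x \<otimes> a \<otimes> inv x" and x: "x \<in> carrier G" and a: "a \<in> S"
    using assms(3) unfolding reflections_def by blast
  have "a \<in> carrier G"
    using a assms(1) by blast
  with x have "r \<otimes> r = x \<otimes> (a \<otimes> a) \<otimes> inv x"
    by (simp add: r m_assoc) (simp add: m_assoc[symmetric])
  with a assms(2) x show ?thesis by simp
qed

lemma conjugates_eq_cancel:
  assumes "P \<in> carrier G" "a \<in> carrier G" "V \<in> carrier G" "b \<in> carrier G" "a \<otimes> a = \<one>"
    and eq: "P \<otimes> a \<otimes> inv P = (P \<otimes> a \<otimes> V) \<otimes> b \<otimes> inv (P \<otimes> a \<otimes> V)"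
  shows "P \<otimes> a \<otimes> V \<otimes> b = P \<otimes> V"
proof -
  have "P \<otimes> a \<otimes> V \<otimes> b = ((P \<otimes> a \<otimes> V) \<otimes> b \<otimes> inv (P \<otimes> a \<otimes> V)) \<otimes> (P \<otimes> a \<otimes> V)"
    using assms(1-4) by (simp add: m_assoc)
  also have "\<dots> = (P \<otimes> a \<otimes> inv P) \<otimes> (P \<otimes> a \<otimes> V)"
    by (simp add: eq)
  also have "\<dots> = P \<otimes> (a \<otimes> a) \<otimes> V"
    using assms(1-3) by (simp add: m_assoc[symmetric]) (simp add: m_assoc)
  finally show ?thesis
    using assms(1,3,5) by simp
qed

lemma word_prod_delete_equal_inversions:
  assumes "set (u @ a # v @ b # x) \<subseteq> carrier G" "a \<otimes> a = \<one>"
    and "invs G (u @ a # v @ b # x) ! length u =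
         invs G (u @ a # v @ b # x) ! Suc (length u + length v)"
  shows "word_prod G (u @ v @ x) = word_prod G (u @ a # v @ b # x)"
proof -
  define P V X where "P = word_prod G u" and "V = word_prod G v" and "X = word_prod G x"
  have carrier: "P \<in> carrier G" "a \<in> carrier G" "V \<in> carrier G" "b \<in> carrier G" "X \<in> carrier G"
    using assms(1) by (auto simp: P_def V_def X_def)
  have "P \<otimes> a \<otimes> inv P = (P \<otimes> a \<otimes> V) \<otimes> b \<otimes> inv (P \<otimes> a \<otimes> V)"
    using assms(1,3) by (simp add: nth_invs nth_append P_def V_def m_assoc)
  then have "P \<otimes> a \<otimes> V \<otimes> b = P \<otimes> V"
    using conjugates_eq_cancel carrier assms(2) by blast
  then have "P \<otimes> V \<otimes> X = P \<otimes> a \<otimes> V \<otimes> b \<otimes> X"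
    by simp
  then show ?thesis
    using assms(1) carrier by (simp add: P_def V_def X_def m_assoc)
qed

lemma distinct_invs_reduced_expr:
  assumes "S \<subseteq> carrier G" "\<forall>s\<in>S. s \<otimes> s = \<one>" and red: "reduced_expr G S w as"
  shows "distinct (invs G as)"
proof (rule ccontr)
  assume "\<not> distinct (invs G as)"
  then obtain i j where ij: "i < j" "j < length as" and eq: "invs G as ! i = invs G as ! j"
    unfolding distinct_conv_nth by (auto elim: linorder_neqE_nat)
  obtain u a v b x where as: "as = u @ a # v @ b # x"
    and "length u = i" "length v = j - Suc i"
    by (rule list_split_at_two_positions[OF ij])
  with ij eq have eq': "invs G as ! length u = invs G as ! Suc (length u + length v)"
    by (simp add: Suc_diff_Suc)
  have asS: "set as \<subseteq> S" and prod: "word_prod G as = w"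
    using red unfolding reduced_expr_def by auto
  have "word_prod G (u @ v @ x) = word_prod G as"
    using asS assms(1,2) eq' unfolding as
    by (intro word_prod_delete_equal_inversions) auto
  moreover have "set (u @ v @ x) \<subseteq> S"
    using asS by (auto simp: as)
  ultimately have "length as \<le> length (u @ v @ x)"
    using red prod unfolding reduced_expr_def by metis
  then show False
    by (simp add: as)
qed

lemma length_rho: "length (rho G s t) = ord (s \<otimes> t)"
  by (simp add: rho_def)

lemma ord_mult_involutions_commute:
  assumes "s \<in> carrier G" "t \<in> carrier G" "s \<otimes> s = \<one>" "t \<otimes> t = \<one>"
  shows "ord (t \<otimes> s) = ord (s \<otimes> t)"
proof -
  have "inv (s \<otimes> t) = t \<otimes> s"
    using assms by (simp add: inv_mult_group inv_equality)
  then show ?thesis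
    using assms(1,2) ord_inv[of "s \<otimes> t"] by simp
qed

lemma ord_mult_distinct_involutions_ge_2:
  assumes "s \<in> carrier G" "t \<in> carrier G" "t \<otimes> t = \<one>" "s \<noteq> t" "ord (s \<otimes> t) \<noteq> 0"
  shows "2 \<le> ord (s \<otimes> t)"
proof -
  have "s \<otimes> t \<noteq> \<one>"
  proof
    assume "s \<otimes> t = \<one>"
    then have "s = inv t"
      using assms(1,2) by (simp add: inv_equality)
    with assms(2-4) show False
      by (simp add: inv_equality)
  qed
  with assms(1,2,5) show ?thesis
    using ord_eq_1[of "s \<otimes> t"] by fastforce
qed

lemma hd_rho:
  assumes "ord (s \<otimes> t) \<noteq> 0" "s \<in> carrier G"
  shows "hd (rho G s t) = s"
  using assms by (simp add: rho_def hd_map)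

lemma last_rho:
  assumes "s \<in> carrier G" "t \<in> carrier G" "s \<otimes> s = \<one>" "t \<otimes> t = \<one>" "ord (s \<otimes> t) \<noteq> 0"
  shows "last (rho G s t) = t"
proof -
  define m where "m = ord (s \<otimes> t)"
  have st: "s \<otimes> t \<in> carrier G"
    using assms(1,2) by simp
  have "(s \<otimes> t) [^] (m - 1) \<otimes> (s \<otimes> t) = (s \<otimes> t) [^] m"
    using assms(5) by (simp add: m_def nat_pow_Suc[symmetric])
  also have "\<dots> = \<one>"
    using st by (simp add: m_def)
  finally have "(s \<otimes> t) [^] (m - 1) = t \<otimes> s"
    using assms st by (metis inv_equality inv_mult_group nat_pow_closed)
  then have "(s \<otimes> t) [^] (m - 1) \<otimes> s = t"
    using assms(1-3) by (simp add: m_assoc)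
  then show ?thesis
    using assms(5) by (simp add: rho_def last_map m_def)
qed

lemma not_subword_rho_and_rho_swapped:
  assumes "distinct xs" "s \<in> carrier G" "t \<in> carrier G" "s \<otimes> s = \<one>" "t \<otimes> t = \<one>"
    and "s \<noteq> t" "ord (s \<otimes> t) \<noteq> 0"
  shows "\<not> (is_subword (rho G s t) xs \<and> is_subword (rho G t s) xs)"
proof -
  have "ord (t \<otimes> s) = ord (s \<otimes> t)" "2 \<le> ord (s \<otimes> t)"
    using ord_mult_involutions_commute[OF assms(2-5)]
      ord_mult_distinct_involutions_ge_2[OF assms(2,3,5-7)] by simp_all
  with assms show ?thesis
    by (intro not_subword_both_with_swapped_ends) (simp_all add: length_rho hd_rho last_rho)
qed

end

theorem proposition3p7:
  fixes G :: "('a, 'b) monoid_scheme" and S :: "'a set" and w s t :: 'a and as :: "'a list"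
  assumes "coxeter_system G S"
    and "w \<in> carrier G"
    and "s \<in> reflections G S" and "t \<in> reflections G S" and "s \<noteq> t"
    and "group.ord G (s \<otimes>\<^bsub>G\<^esub> t) \<noteq> 0"
    and "reduced_expr G S w as"
  shows "(\<forall>js ks. subword_at (invs G as) js (rho G s t) \<longrightarrow>
                  subword_at (invs G as) ks (rho G s t) \<longrightarrow> js = ks)
         \<and> \<not> (is_subword (rho G s t) (invs G as) \<and> is_subword (rho G t s) (invs G as))"
proof -
  interpret group G
    using assms(1) by (simp add: coxeter_system_def)
  have S: "S \<subseteq> carrier G" "\<forall>s\<in>S. s \<otimes>\<^bsub>G\<^esub> s = \<one>\<^bsub>G\<^esub>"
    using assms(1) by (simp_all add: coxeter_system_def)
  have distinct: "distinct (invs G as)"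
    using distinct_invs_reduced_expr[OF S assms(7)] .
  have "\<not> (is_subword (rho G s t) (invs G as) \<and> is_subword (rho G t s) (invs G as))"
    using assms(3-6) S reflection_closed reflection_square
    by (intro not_subword_rho_and_rho_swapped[OF distinct]) simp_all
  then show ?thesis
    using subword_at_distinct_unique[OF distinct] by blast
qed

end
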